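(* Fix $H$, $T$, an integer $A_{\mathcal X}>H$, and $\delta\in(0,1/4)$. Let $K=\lfloor A_{\mathcal X}/H\rfloor$ if $A_{\mathcal X}\ge2H$ and $K=2$ otherwise, and assume $T\ge0.4K\log(1/(4\delta))$. There is a universal constant $c>0$ such that for any max-player algorithm there exists a game (with horizon $H$, perfect recall, deterministic rewards in $[0,1]$, total number of max-player actions $A_{\mathcal X}$, in which the min-player's actions affect neither transitions nor rewards) such that with probability greater than $\delta$ the algorithm's regret satisfies $$\mathrm{Reg}^T_{\max}\ge c\sqrt{(A_{\mathcal X}-H)\min\{A_{\mathcal X}-H,H\}\,T\log(1/(4\delta))}.$$ (If $A_{\mathcal X}<H$, no such game exists.)
   Context: An episodic two-player zero-sum imperfect-information game with horizon $H$ and perfect recall: the max-player has information sets $\mathcal X=\bigsqcup_{h=1}^H\mathcal X_h$ with finite action sets $\mathcal A(x)$ (sizes allowed to vary), $A_{\mathcal X}=\sum_x|\mathcal A(x)|$; every information set has a unique history of previous own information sets and actions, and every (information set, action) pair at depth $h<H$ is followed by at least one information set at depth $h+1$. Rewards $r_h\in[0,1]$ go to the max-player. A max-player algorithm is a sequence of measurable maps $\mathcal L^t$ sending the observed history $(x^u_h,a^u_h,r^u_h)_{u<t,h\le H}$ to a policy $\mu^t$ used in episode $t$. With $V^{\mu,\nu}=\mathbb E^{\mu,\nu}[\sum_hr_h]$ and opponent policies $\nu^t$, the regret is $\mathrm{Reg}^T_{\max}=\max_{\mu^\dagger}\sum_{t=1}^T(V^{\mu^\dagger,\nu^t}-V^{\mu^t,\nu^t})$.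 *)

theory Defs
  imports "HOL-Probability.Probability"
begin

text \<open>
  IX: the information sets; ilev x: the depth h of x; iact x: the action set A(x);
  ipar x: for an information set of depth at least 2, its (unique) preceding own
  information set and action (perfect recall).
\<close>
record infostruct =
  IX   :: "nat set"
  ilev :: "nat \<Rightarrow> nat"
  iact :: "nat \<Rightarrow> nat set"
  ipar :: "nat \<Rightarrow> nat \<times> nat"

definition wf_struct :: "nat \<Rightarrow> infostruct \<Rightarrow> bool" where
  "wf_struct H S \<longleftrightarrow>
     finite (IX S) \<and>
     (\<forall>x\<in>IX S. 1 \<le> ilev S x \<and> ilev S x \<le> H \<and> finite (iact S x) \<and> iact S x \<noteq> {}) \<and>
     (\<forall>x\<in>IX S. 2 \<le> ilev S x \<longrightarrow>
        fst (ipar S x) \<in> IX S \<and> ilev S (fst (ipar S x)) = ilev S x - 1 \<and>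
        snd (ipar S x) \<in> iact S (fst (ipar S x))) \<and>
     (\<forall>x\<in>IX S. \<forall>a\<in>iact S x. ilev S x < H \<longrightarrow>
        (\<exists>x'\<in>IX S. ilev S x' = ilev S x + 1 \<and> ipar S x' = (x, a)))"

definition num_actions :: "infostruct \<Rightarrow> nat" where
  "num_actions S = (\<Sum>x\<in>IX S. card (iact S x))"

text \<open>
  A game in which the min-player's actions affect neither transitions nor rewards
  (so the min-player is not modelled).  Hidden states are naturals; obs s is the
  max-player information set of state s; init is the initial state distribution;
  trans h s a the transition kernel at step h; rew h s a the deterministic reward.
\<close>
record game =
  gstruct :: infostruct
  obs     :: "nat \<Rightarrow> nat"
  init    :: "nat pmf"
  trans   :: "nat \<Rightarrow> nat \<Rightarrow> nat \<Rightarrow> nat pmf"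
  rew     :: "nat \<Rightarrow> nat \<Rightarrow> nat \<Rightarrow> real"

definition wf_game :: "nat \<Rightarrow> game \<Rightarrow> bool" where
  "wf_game H g \<longleftrightarrow>
     wf_struct H (gstruct g) \<and>
     (\<forall>s\<in>set_pmf (init g). obs g s \<in> IX (gstruct g) \<and> ilev (gstruct g) (obs g s) = 1) \<and>
     (\<forall>h s a. obs g s \<in> IX (gstruct g) \<and> ilev (gstruct g) (obs g s) = h \<and> h < H \<and>
        a \<in> iact (gstruct g) (obs g s) \<longrightarrow>
        (\<forall>s'\<in>set_pmf (trans g h s a).
           obs g s' \<in> IX (gstruct g) \<and> ilev (gstruct g) (obs g s') = h + 1 \<and>
           ipar (gstruct g) (obs g s') = (obs g s, a))) \<and>
     (\<forall>h s a. 0 \<le> rew g h s a \<and> rew g h s a \<le> 1)"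

type_synonym policy = "nat \<Rightarrow> nat pmf"
type_synonym trace = "(nat \<times> nat \<times> real) list"

definition valid_policy :: "infostruct \<Rightarrow> policy \<Rightarrow> bool" where
  "valid_policy S \<mu> \<longleftrightarrow> (\<forall>x\<in>IX S. set_pmf (\<mu> x) \<subseteq> iact S x)"

text \<open>Play from step h in state s for k remaining steps, recording (x_h, a_h, r_h).\<close>
primrec ep :: "game \<Rightarrow> policy \<Rightarrow> nat \<Rightarrow> nat \<Rightarrow> nat \<Rightarrow> trace pmf" where
  "ep g \<mu> h 0 s = return_pmf []"
| "ep g \<mu> h (Suc k) s =
     bind_pmf (\<mu> (obs g s)) (\<lambda>a.
       bind_pmf (if k = 0 then return_pmf [] else bind_pmf (trans g h s a) (ep g \<mu> (Suc h) k))
         (\<lambda>rest. return_pmf ((obs g s, a, rew g h s a) # rest)))"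

definition episode :: "nat \<Rightarrow> game \<Rightarrow> policy \<Rightarrow> trace pmf" where
  "episode H g \<mu> = bind_pmf (init g) (ep g \<mu> 1 H)"

definition val :: "nat \<Rightarrow> game \<Rightarrow> policy \<Rightarrow> real" where
  "val H g \<mu> = measure_pmf.expectation (episode H g \<mu>) (\<lambda>tr. sum_list (map (\<lambda>(x, a, r). r) tr))"

text \<open>
  A max-player algorithm: L S t hist is the policy mu^t used in episode t (0-indexed)
  given the observed history hist of the previous episodes; it may depend on the
  (known) information structure S.
\<close>
type_synonym algorithm = "infostruct \<Rightarrow> nat \<Rightarrow> trace list \<Rightarrow> policy"

definition valid_alg :: "nat \<Rightarrow> algorithm \<Rightarrow> bool" where
  "valid_alg H L \<longleftrightarrow> (\<forall>S t hist. wf_struct H S \<longrightarrow> valid_policy S (L S t hist))"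

primrec run :: "nat \<Rightarrow> game \<Rightarrow> algorithm \<Rightarrow> nat \<Rightarrow> trace list pmf" where
  "run H g L 0 = return_pmf []"
| "run H g L (Suc t) =
     bind_pmf (run H g L t) (\<lambda>hist.
       bind_pmf (episode H g (L (gstruct g) t hist)) (\<lambda>e. return_pmf (hist @ [e])))"

definition regret :: "nat \<Rightarrow> game \<Rightarrow> algorithm \<Rightarrow> nat \<Rightarrow> trace list \<Rightarrow> real" where
  "regret H g L T hist =
     (SUP \<mu>\<in>{\<mu>. valid_policy (gstruct g) \<mu>}.
        \<Sum>t<T. val H g \<mu> - val H g (L (gstruct g) t (take t hist)))"

end

theory Submission
  imports Defs
begin

text \<open>A bandit is embedded in the game: after a stem of \<open>H - d\<close> forced steps the max-player makes
  a single choice among \<open>n\<close> arms, and the chosen arm's Bernoulli bit is then paid at each of the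
  remaining \<open>d\<close> steps; dummy actions at one leaf bring the action count to exactly \<open>A\<^sub>X\<close>.
  When arm \<open>j\<close> has mean \<open>1/2 + \<epsilon>\<close> and the others mean \<open>1/2\<close>, every episode not spent on
  arm \<open>j\<close> costs \<open>d \<epsilon>\<close>. Against the all-fair instance some arm \<open>j\<close> is, with probability at
  least \<open>1/2\<close>, given at most half of the algorithm's weight and pulled at most \<open>k \<approx> 4T/n\<close> times.
  A second-moment change of measure transfers this event to the instance biased towards \<open>j\<close>,
  losing only a factor \<open>(1 - 4\<epsilon>\<^sup>2)\<^sup>k\<close>; with \<open>\<epsilon>\<^sup>2 = n log(1/(4\<delta>)) / (64 T)\<close> the event keeps
  probability above \<open>\<delta>\<close>, and on it the regret is at least \<open>d \<epsilon> T / 2\<close>. Taking \<open>d = H\<close>,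
  \<open>n = \<lfloor>A\<^sub>X / H\<rfloor>\<close>, or \<open>d = A\<^sub>X - H\<close>, \<open>n = 2\<close>, gives the theorem with \<open>c = 1/32\<close>.\<close>

section \<open>Bandits with one biased arm\<close>

fun history_pmf :: "(nat \<Rightarrow> 'e list \<Rightarrow> 'e pmf) \<Rightarrow> nat \<Rightarrow> 'e list pmf" where
  "history_pmf E 0 = return_pmf []"
| "history_pmf E (Suc t) =
     bind_pmf (history_pmf E t) (\<lambda>h. bind_pmf (E t h) (\<lambda>e. return_pmf (h @ [e])))"

lemma length_history: "h \<in> set_pmf (history_pmf E t) \<Longrightarrow> length h = t"
  by (induction t arbitrary: h) auto

definition arm_coin :: "nat \<Rightarrow> real \<Rightarrow> nat \<Rightarrow> bool pmf" where
  "arm_coin j p a = bernoulli_pmf (if a = j then p else 1/2)"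

definition bandit_step :: "(nat \<Rightarrow> 'e list \<Rightarrow> nat pmf) \<Rightarrow> (nat \<Rightarrow> 'e list \<Rightarrow> nat \<Rightarrow> bool \<Rightarrow> 'e pmf)
    \<Rightarrow> nat \<Rightarrow> real \<Rightarrow> nat \<Rightarrow> 'e list \<Rightarrow> 'e pmf" where
  "bandit_step \<pi> Q j p t h = bind_pmf (\<pi> t h) (\<lambda>a. bind_pmf (arm_coin j p a) (Q t h a))"

lemma bandit_step_fair: "bandit_step \<pi> Q j (1/2) = bandit_step \<pi> Q j' (1/2)"
  by (intro ext) (simp add: bandit_step_def arm_coin_def)

definition coin_ratio :: "nat \<Rightarrow> real \<Rightarrow> nat \<Rightarrow> bool \<Rightarrow> real" where
  "coin_ratio j p a b = (if a = j then (if b then 1 / (2 * p) else 1 / (2 * (1 - p))) else 1)"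

definition likelihood_ratio :: "('e \<Rightarrow> nat) \<Rightarrow> ('e \<Rightarrow> bool) \<Rightarrow> nat \<Rightarrow> real \<Rightarrow> 'e list \<Rightarrow> real" where
  "likelihood_ratio arm coin j p h = (\<Prod>e\<leftarrow>h. coin_ratio j p (arm e) (coin e))"

definition lr_moment :: "real \<Rightarrow> real" where
  "lr_moment p = 1 / (4 * p * (1 - p))"

lemma coin_ratio_pos: "0 < p \<Longrightarrow> p < 1 \<Longrightarrow> 0 < coin_ratio j p a b"
  by (simp add: coin_ratio_def)

lemma likelihood_ratio_pos: "0 < p \<Longrightarrow> p < 1 \<Longrightarrow> 0 < likelihood_ratio arm coin j p h"
  unfolding likelihood_ratio_def by (induction h) (auto simp: coin_ratio_pos)

lemma likelihood_ratio_snoc: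
  "likelihood_ratio arm coin j p (h @ [e]) = likelihood_ratio arm coin j p h * coin_ratio j p (arm e) (coin e)"
  by (simp add: likelihood_ratio_def)

lemma lr_moment_ge_1: "0 < p \<Longrightarrow> p < 1 \<Longrightarrow> 1 \<le> lr_moment p"
  using zero_le_power2[of "2 * p - 1"]
  by (simp add: lr_moment_def power2_eq_square algebra_simps)

lemma lr_moment_half_plus: "lr_moment (1/2 + \<epsilon>) = 1 / (1 - 4 * \<epsilon>\<^sup>2)"
  by (simp add: lr_moment_def power2_eq_square algebra_simps)

lemma nn_integral_arm_coin_change:
  assumes p: "0 < p" "p < 1"
  shows "(\<integral>\<^sup>+b. F b \<partial>arm_coin j (1/2) a) = (\<integral>\<^sup>+b. F b * ennreal (coin_ratio j p a b) \<partial>arm_coin j p a)"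
proof (cases "a = j")
  case True
  have half: "ennreal x * ennreal y = ennreal (1/2)" if "0 \<le> x" "0 \<le> y" "x * y = 1/2" for x y
    by (simp only: ennreal_mult[OF that(1,2), symmetric] that(3))
  have "ennreal (1 / (2 * p)) * ennreal p = ennreal (1/2)"
    "ennreal (1 / (2 * (1 - p))) * ennreal (1 - p) = ennreal (1/2)"
    using p by (intro half; simp)+
  then show ?thesis
    using True p by (simp add: arm_coin_def coin_ratio_def mult.assoc)
qed (simp add: arm_coin_def coin_ratio_def)

lemma integral_arm_coin_ratio:
  assumes p: "0 < p" "p < 1"
  shows "(\<integral>b. coin_ratio j p a b \<partial>arm_coin j (1/2) a) = (if a = j then lr_moment p else 1)"
  using p by (simp add: arm_coin_def coin_ratio_def lr_moment_def field_simps)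

definition pulls :: "('e \<Rightarrow> nat) \<Rightarrow> nat \<Rightarrow> 'e list \<Rightarrow> nat" where
  "pulls arm j h = length (filter (\<lambda>e. arm e = j) h)"

lemma pulls_Cons: "pulls arm j (e # h) = pulls arm j h + (if arm e = j then 1 else 0)"
  by (simp add: pulls_def)

text \<open>The likelihood ratio of the first \<open>k\<close> pulls of arm \<open>j\<close>, each pull that has not yet
  happened contributing its mean \<open>lr_moment p\<close>; this makes it a martingale under the fair coins.\<close>
fun capped_ratio :: "('e \<Rightarrow> nat) \<Rightarrow> ('e \<Rightarrow> bool) \<Rightarrow> nat \<Rightarrow> real \<Rightarrow> nat \<Rightarrow> 'e list \<Rightarrow> real" where
  "capped_ratio arm coin j p k [] = lr_moment p ^ k"
| "capped_ratio arm coin j p k (e # h) =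
     (if arm e = j \<and> 0 < k then coin_ratio j p j (coin e) * capped_ratio arm coin j p (k - 1) h
      else capped_ratio arm coin j p k h)"

lemma capped_ratio_snoc:
  assumes p: "0 < p" "p < 1"
  shows "capped_ratio arm coin j p k (h @ [e]) = capped_ratio arm coin j p k h *
     (if arm e = j \<and> pulls arm j h < k then coin_ratio j p j (coin e) / lr_moment p else 1)"
proof (induction h arbitrary: k)
  case Nil
  have "lr_moment p ^ k = lr_moment p ^ (k - 1) * lr_moment p" if "0 < k"
    using that by (simp add: power_eq_if)
  then show ?case using lr_moment_ge_1[OF p] by (simp add: pulls_def)
qed (auto simp: pulls_Cons)

lemma capped_ratio_eq_likelihood_ratio:
  "pulls arm j h \<le> k \<Longrightarrow>
     capped_ratio arm coin j p k h = likelihood_ratio arm coin j p h * lr_moment p ^ (k - pulls arm j h)"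
  by (induction h arbitrary: k) (auto simp: likelihood_ratio_def pulls_def coin_ratio_def)

lemma capped_ratio_nonneg: "0 < p \<Longrightarrow> p < 1 \<Longrightarrow> 0 \<le> capped_ratio arm coin j p k h"
  by (induction h arbitrary: k) (auto simp: coin_ratio_def lr_moment_def)

lemma likelihood_ratio_le_capped_ratio:
  assumes p: "0 < p" "p < 1" and "pulls arm j h \<le> k"
  shows "likelihood_ratio arm coin j p h \<le> capped_ratio arm coin j p k h"
proof -
  have "1 \<le> lr_moment p ^ (k - pulls arm j h)"
    using lr_moment_ge_1[OF p] by (rule one_le_power)
  then show ?thesis
    using capped_ratio_eq_likelihood_ratio[OF assms(3)] likelihood_ratio_pos[OF p, of arm coin j h]
    by simp
qed

lemma le_add_square_div:
  fixes x B :: real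
  assumes "0 < B"
  shows "x \<le> B + x\<^sup>2 / (4 * B)"
proof -
  have "4 * B * x \<le> x\<^sup>2 + 4 * B * B"
    using zero_le_power2[of "x - 2 * B"] by (simp add: power2_eq_square algebra_simps)
  then show ?thesis using assms by (simp add: field_simps)
qed

locale revealing_bandit =
  fixes \<pi> :: "nat \<Rightarrow> 'e list \<Rightarrow> nat pmf"
    and Q :: "nat \<Rightarrow> 'e list \<Rightarrow> nat \<Rightarrow> bool \<Rightarrow> 'e pmf"
    and arm :: "'e \<Rightarrow> nat" and coin :: "'e \<Rightarrow> bool"
  assumes outcome_reveals: "e \<in> set_pmf (Q t h a b) \<Longrightarrow> arm e = a \<and> coin e = b"
begin

lemma nn_integral_outcome_mult:
  "(\<integral>\<^sup>+e. f e * ennreal (g (arm e) (coin e)) \<partial>Q t h a b) = (\<integral>\<^sup>+e. f e \<partial>Q t h a b) * ennreal (g a b)"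
  by (subst nn_integral_multc[symmetric]) (auto intro!: nn_integral_cong_AE AE_pmfI dest: outcome_reveals)

lemma nn_integral_step_change:
  assumes p: "0 < p" "p < 1"
  shows "(\<integral>\<^sup>+e. f e \<partial>bandit_step \<pi> Q j (1/2) t h)
       = (\<integral>\<^sup>+e. f e * ennreal (coin_ratio j p (arm e) (coin e)) \<partial>bandit_step \<pi> Q j p t h)"
  unfolding bandit_step_def nn_integral_bind_pmf nn_integral_outcome_mult
  by (intro nn_integral_cong nn_integral_arm_coin_change[OF p])

lemma nn_integral_history_change:
  assumes p: "0 < p" "p < 1"
  shows "(\<integral>\<^sup>+h. f h \<partial>history_pmf (bandit_step \<pi> Q j (1/2)) t)
       = (\<integral>\<^sup>+h. f h * ennreal (likelihood_ratio arm coin j p h) \<partial>history_pmf (bandit_step \<pi> Q j p) t)"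
proof (induction t arbitrary: f)
  case 0
  then show ?case by (simp add: likelihood_ratio_def)
next
  case (Suc t)
  let ?M = "\<lambda>q. history_pmf (bandit_step \<pi> Q j q) t" and ?E = "\<lambda>q. bandit_step \<pi> Q j q t"
  let ?c = "\<lambda>e. ennreal (coin_ratio j p (arm e) (coin e))"
  have "(\<integral>\<^sup>+h. f h \<partial>history_pmf (bandit_step \<pi> Q j (1/2)) (Suc t))
      = (\<integral>\<^sup>+h. (\<integral>\<^sup>+e. f (h @ [e]) * ?c e \<partial>?E p h) \<partial>?M (1/2))"
    by (simp add: nn_integral_step_change[OF p])
  also have "\<dots> = (\<integral>\<^sup>+h. (\<integral>\<^sup>+e. f (h @ [e]) * ?c e \<partial>?E p h) * ennreal (likelihood_ratio arm coin j p h) \<partial>?M p)"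
    by (rule Suc.IH)
  also have "\<dots> = (\<integral>\<^sup>+h. f h * ennreal (likelihood_ratio arm coin j p h) \<partial>history_pmf (bandit_step \<pi> Q j p) (Suc t))"
  proof (simp, intro nn_integral_cong)
    fix h
    show "(\<integral>\<^sup>+e. f (h @ [e]) * ?c e \<partial>?E p h) * ennreal (likelihood_ratio arm coin j p h)
        = (\<integral>\<^sup>+e. f (h @ [e]) * ennreal (likelihood_ratio arm coin j p (h @ [e])) \<partial>?E p h)"
      unfolding likelihood_ratio_snoc
      by (subst nn_integral_multc[symmetric])
        (auto intro!: nn_integral_cong simp: ennreal_mult' likelihood_ratio_pos[OF p, THEN less_imp_le] mult_ac)
  qed
  finally show ?case .
qed

lemma capped_ratio_mean:
  assumes p: "0 < p" "p < 1"
  shows "(\<integral>\<^sup>+h. ennreal (capped_ratio arm coin j p k h) \<partial>history_pmf (bandit_step \<pi> Q j (1/2)) t)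
       = ennreal (lr_moment p ^ k)"
proof (induction t)
  case 0
  then show ?case by simp
next
  case (Suc t)
  define g where "g h a b = (if a = j \<and> pulls arm j h < k then coin_ratio j p a b / lr_moment p else 1)" for h a b
  have g_nonneg: "0 \<le> g h a b" for h a b
    using p lr_moment_ge_1[OF p] by (simp add: g_def coin_ratio_def)
  have coin_mean: "(\<integral>\<^sup>+b. ennreal (g h a b) \<partial>arm_coin j (1/2) a) = 1" for h a
  proof -
    have "(\<integral>b. g h a b \<partial>arm_coin j (1/2) a) = 1"
    proof (cases "a = j \<and> pulls arm j h < k")
      case True
      then show ?thesis
        using integral_arm_coin_ratio[OF p, of j a] lr_moment_ge_1[OF p] by (simp add: g_def)
    next
      case False
      then have "g h a = (\<lambda>_. 1)" by (auto simp: g_def)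
      then show ?thesis by simp
    qed
    then show ?thesis
      using g_nonneg by (subst nn_integral_eq_integral) (auto intro: integrable_measure_pmf_finite)
  qed
  have step_mean: "(\<integral>\<^sup>+e. ennreal (g h (arm e) (coin e)) \<partial>bandit_step \<pi> Q j (1/2) t h) = 1" for h
    using nn_integral_outcome_mult[where f = "\<lambda>_. 1"]
    by (simp add: bandit_step_def coin_mean)
  have "ennreal (capped_ratio arm coin j p k (h @ [e]))
      = ennreal (capped_ratio arm coin j p k h) * ennreal (g h (arm e) (coin e))" for h e
    unfolding capped_ratio_snoc[OF p]
    by (rule ennreal_mult'[OF capped_ratio_nonneg[OF p], THEN trans]) (simp add: g_def)
  then show ?case
    using Suc.IH by (simp add: nn_integral_cmult step_mean)
qed

text \<open>With \<open>\<rho>\<close> the likelihood ratio and \<open>B = lr_moment p ^ k\<close>: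
  \<open>P\<^sub>0(G) = E\<^sub>p[1\<^sub>G \<rho>] \<le> B P\<^sub>p(G) + E\<^sub>p[1\<^sub>G \<rho>\<^sup>2] / (4B)\<close>, and \<open>E\<^sub>p[1\<^sub>G \<rho>\<^sup>2] = E\<^sub>0[1\<^sub>G \<rho>]\<close> is at most
  the mean \<open>B\<close> of the capped ratio, which dominates \<open>\<rho>\<close> on \<open>G\<close>.\<close>
lemma change_of_measure:
  assumes p: "0 < p" "p < 1" and few_pulls: "\<And>h. h \<in> G \<Longrightarrow> pulls arm j h \<le> k"
  shows "measure_pmf.prob (history_pmf (bandit_step \<pi> Q j (1/2)) t) G
           \<le> lr_moment p ^ k * measure_pmf.prob (history_pmf (bandit_step \<pi> Q j p) t) G + 1/4"
proof -
  define M0 where "M0 = history_pmf (bandit_step \<pi> Q j (1/2)) t"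
  define Mp where "Mp = history_pmf (bandit_step \<pi> Q j p) t"
  define B where "B = lr_moment p ^ k"
  define \<rho> where "\<rho> = likelihood_ratio arm coin j p"
  have B: "1 \<le> B" unfolding B_def using lr_moment_ge_1[OF p] by (rule one_le_power)
  have \<rho>_pos: "0 < \<rho> h" for h unfolding \<rho>_def by (rule likelihood_ratio_pos[OF p])
  have change: "(\<integral>\<^sup>+h. ennreal (indicator G h * f h) \<partial>M0)
      = (\<integral>\<^sup>+h. ennreal (indicator G h * f h * \<rho> h) \<partial>Mp)" if "\<And>h. 0 \<le> f h" for f
    unfolding M0_def Mp_def \<rho>_def nn_integral_history_change[OF p]
    using that by (intro nn_integral_cong) (simp add: ennreal_mult' split: split_indicator)
  have pointwise: "ennreal (indicator G h * \<rho> h)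
      \<le> ennreal B * indicator G h + ennreal (1 / (4 * B)) * ennreal (indicator G h * \<rho> h * \<rho> h)" for h
  proof (cases "h \<in> G")
    case True
    have "\<rho> h \<le> B + 1 / (4 * B) * (\<rho> h * \<rho> h)"
      using le_add_square_div[of B "\<rho> h"] B by (simp add: power2_eq_square)
    then have "ennreal (\<rho> h) \<le> ennreal (B + 1 / (4 * B) * (\<rho> h * \<rho> h))"
      by (rule ennreal_leI)
    also have "\<dots> = ennreal B + ennreal (1 / (4 * B)) * ennreal (\<rho> h * \<rho> h)"
      using B \<rho>_pos[of h] by (subst ennreal_plus) (auto simp: ennreal_mult[symmetric])
    finally show ?thesis using True by simp
  qed simp
  have "(\<integral>\<^sup>+h. ennreal (indicator G h * \<rho> h) \<partial>M0) \<le> (\<integral>\<^sup>+h. ennreal (capped_ratio arm coin j p k h) \<partial>M0)"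
    using likelihood_ratio_le_capped_ratio[OF p few_pulls] capped_ratio_nonneg[OF p]
    by (intro nn_integral_mono ennreal_leI) (auto simp: \<rho>_def split: split_indicator)
  also have "\<dots> = ennreal B"
    unfolding M0_def B_def by (rule capped_ratio_mean[OF p])
  finally have second_moment: "(\<integral>\<^sup>+h. ennreal (indicator G h * \<rho> h * \<rho> h) \<partial>Mp) \<le> ennreal B"
    using change[of \<rho>] \<rho>_pos by (simp add: less_imp_le)
  have "emeasure M0 G = (\<integral>\<^sup>+h. ennreal (indicator G h * \<rho> h) \<partial>Mp)"
    using change[of "\<lambda>_. 1"] by (simp add: ennreal_indicator nn_integral_indicator[symmetric] del: nn_integral_indicator)
  also have "\<dots> \<le> (\<integral>\<^sup>+h. ennreal B * indicator G h
                      + ennreal (1 / (4 * B)) * ennreal (indicator G h * \<rho> h * \<rho> h) \<partial>Mp)"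
    by (intro nn_integral_mono pointwise)
  also have "\<dots> = ennreal B * emeasure Mp G
                   + ennreal (1 / (4 * B)) * (\<integral>\<^sup>+h. ennreal (indicator G h * \<rho> h * \<rho> h) \<partial>Mp)"
    by (simp add: nn_integral_add nn_integral_cmult)
  also have "\<dots> \<le> ennreal B * emeasure Mp G + ennreal (1 / (4 * B)) * ennreal B"
    by (intro add_mono mult_left_mono second_moment) auto
  also have "\<dots> = ennreal (B * measure Mp G + 1/4)"
    using B by (simp add: measure_pmf.emeasure_eq_measure ennreal_plus ennreal_mult[symmetric])
  finally have "ennreal (measure M0 G) \<le> ennreal (B * measure Mp G + 1/4)"
    by (simp add: measure_pmf.emeasure_eq_measure)
  then show ?thesis
    unfolding M0_def Mp_def B_def using B by (subst (asm) ennreal_le_iff) (simp_all add: B_def)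
qed

end

section \<open>A rarely pulled arm\<close>

lemma sum_pulls_le_length: "finite J \<Longrightarrow> (\<Sum>j\<in>J. pulls arm j h) \<le> length h"
proof (induction h)
  case (Cons e h)
  have "(\<Sum>j\<in>J. if arm e = j then 1 else 0) \<le> (1::nat)"
    using Cons.prems by (simp add: sum.If_cases)
  then show ?case using Cons by (simp add: pulls_Cons sum.distrib)
qed (simp add: pulls_def)

lemma pmf_add_pmf_le_1: "x \<noteq> y \<Longrightarrow> pmf M x + pmf M y \<le> 1"
  using measure_pmf.prob_le_1[of M "{x, y}"] by (simp add: measure_measure_pmf_finite)

definition rarely_pulled :: "(nat \<Rightarrow> 'e list \<Rightarrow> nat pmf) \<Rightarrow> ('e \<Rightarrow> nat) \<Rightarrow> nat \<Rightarrow> nat \<Rightarrow> nat \<Rightarrow> 'e list set" where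
  "rarely_pulled \<pi> arm T k j = {h. (\<Sum>t<T. pmf (\<pi> t (take t h)) j) \<le> real T / 2 \<and> pulls arm j h \<le> k}"

text \<open>At most one arm can get more than half of the policy's weight, and fewer than \<open>n/4\<close> arms
  can be pulled more than \<open>k\<close> times.\<close>
lemma card_not_rarely_pulled:
  assumes n: "2 \<le> n" and k: "4 * T < (k + 1) * n" and len: "length h = T"
  shows "2 * card {j\<in>{..<n}. h \<notin> rarely_pulled \<pi> arm T k j} \<le> n"
proof -
  define weight where "weight j = (\<Sum>t<T. pmf (\<pi> t (take t h)) j)" for j
  define A where "A = {j\<in>{..<n}. real T / 2 < weight j}"
  define C where "C = {j\<in>{..<n}. k < pulls arm j h}"
  have "card A \<le> 1"
  proof -
    have "x = y" if "x \<in> A" "y \<in> A" for x y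
    proof (rule ccontr)
      assume "x \<noteq> y"
      then have "weight x + weight y \<le> (\<Sum>t<T. 1)"
        unfolding weight_def sum.distrib[symmetric] by (intro sum_mono pmf_add_pmf_le_1)
      then show False using that by (simp add: A_def)
    qed
    then show ?thesis by (simp add: card_le_Suc0_iff_eq A_def)
  qed
  moreover have "4 * card C < n"
  proof -
    have "card C * (k + 1) = (\<Sum>j\<in>C. k + 1)" by simp
    also have "\<dots> \<le> (\<Sum>j\<in>C. pulls arm j h)" by (intro sum_mono) (auto simp: C_def)
    also have "\<dots> \<le> T" using sum_pulls_le_length[of C arm h] len by (simp add: C_def)
    finally have "4 * card C * (k + 1) < n * (k + 1)" using k by (simp add: algebra_simps)
    then show ?thesis using mult_less_cancel2 by blast
  qed
  moreover have "card {j\<in>{..<n}. h \<notin> rarely_pulled \<pi> arm T k j} \<le> card (A \<union> C)"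
    by (intro card_mono) (auto simp: A_def C_def rarely_pulled_def weight_def)
  moreover have "card (A \<union> C) \<le> card A + card C" by (rule card_Un_le)
  ultimately show ?thesis using n by linarith
qed

lemma exists_rarely_pulled_arm:
  assumes n: "2 \<le> n" and k: "4 * T < (k + 1) * n"
  shows "\<exists>j<n. 1/2 \<le> measure_pmf.prob (history_pmf E T) (rarely_pulled \<pi> arm T k j)"
proof (rule ccontr)
  define M where "M = history_pmf E T"
  define G where "G = rarely_pulled \<pi> arm T k"
  assume "\<not> ?thesis"
  then have "1/2 < measure_pmf.prob M (- G j)" if "j < n" for j
    using that measure_pmf.prob_compl[of "G j" M] by (force simp: G_def M_def Compl_eq_Diff_UNIV)
  then have "(\<Sum>j<n. 1/2) < (\<Sum>j<n. measure_pmf.prob M (- G j))"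
    using n by (intro sum_strict_mono) (auto simp: lessThan_empty_iff)
  moreover have "(\<Sum>j<n. measure_pmf.prob M (- G j)) \<le> real n / 2"
  proof -
    have "ennreal (\<Sum>j<n. measure_pmf.prob M (- G j)) = (\<integral>\<^sup>+h. (\<Sum>j<n. indicator (- G j) h) \<partial>M)"
      by (simp add: nn_integral_sum measure_pmf.emeasure_eq_measure)
    also have "\<dots> \<le> (\<integral>\<^sup>+h. ennreal (real n / 2) \<partial>M)"
    proof (intro nn_integral_mono_AE AE_pmfI)
      fix h assume "h \<in> set_pmf M"
      then have "2 * card {j\<in>{..<n}. h \<notin> G j} \<le> n"
        unfolding G_def M_def by (intro card_not_rarely_pulled[OF n k] length_history)
      then show "(\<Sum>j<n. indicator (- G j) h) \<le> ennreal (real n / 2)"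
        by (simp add: indicator_def sum.If_cases Int_def ennreal_of_nat_eq_real_of_nat ennreal_leI)
    qed
    finally show ?thesis by simp
  qed
  ultimately show False by simp
qed

section \<open>The bias and the pull budget\<close>

lemma four_delta_less_power:
  fixes \<delta> x :: real
  assumes \<delta>: "0 < \<delta>" "\<delta> < 1/4" and x: "0 \<le> x" "x \<le> 1/2"
    and k: "real k * x \<le> ln (1 / (4 * \<delta>)) / 4"
  shows "4 * \<delta> < (1 - x) ^ k"
proof -
  have "- x - 2 * x\<^sup>2 \<le> ln (1 - x)"
    using x by (intro ln_one_minus_pos_lower_bound) simp_all
  moreover have "2 * x\<^sup>2 \<le> x"
    using x mult_right_mono[of x "1/2" x] by (simp add: power2_eq_square)
  ultimately have "- 2 * x \<le> ln (1 - x)" by simp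
  then have "real k * (- 2 * x) \<le> real k * ln (1 - x)"
    by (rule mult_left_mono) simp
  also have "\<dots> = ln ((1 - x) ^ k)"
    using x by (simp add: ln_realpow)
  finally have "real k * (- 2 * x) \<le> ln ((1 - x) ^ k)" .
  moreover have "ln (4 * \<delta>) < - ln (1 / (4 * \<delta>)) / 2"
    using \<delta> by (simp add: ln_div)
  ultimately have "ln (4 * \<delta>) < ln ((1 - x) ^ k)"
    using k by simp
  then show ?thesis
    using \<delta> x by (simp add: ln_less_cancel_iff)
qed

lemma exists_hard_bias:
  fixes \<delta> :: real
  assumes \<delta>: "0 < \<delta>" "\<delta> < 1/4" and n: "2 \<le> n" and T: "0.4 * real n * ln (1 / (4 * \<delta>)) \<le> real T"
  shows "\<exists>\<epsilon> k. 0 < \<epsilon> \<and> \<epsilon> < 1/2 \<and> 4 * T < (k + 1) * n \<and> 4 * \<delta> < (1 - 4 * \<epsilon>\<^sup>2) ^ k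
           \<and> \<epsilon> * real T = sqrt (real n * real T * ln (1 / (4 * \<delta>))) / 8"
proof (intro exI conjI)
  define l where "l = ln (1 / (4 * \<delta>))"
  have l: "0 < l" using \<delta> by (simp add: l_def)
  then have "0 < 0.4 * real n * l" using n by simp
  then have T_pos: "0 < real T" using T by (simp add: l_def)
  define \<epsilon> where "\<epsilon> = sqrt (real n * l / (64 * real T))"
  define k where "k = 4 * T div n"
  have \<epsilon>2: "\<epsilon>\<^sup>2 = real n * l / (64 * real T)"
    using l T_pos by (simp add: \<epsilon>_def)
  have nl: "real n * l \<le> 5/2 * real T"
    using T by (simp add: l_def)
  show "0 < \<epsilon>" using l T_pos n by (simp add: \<epsilon>_def)
  have "\<epsilon>\<^sup>2 < (1/2)\<^sup>2"
    using nl T_pos by (simp add: \<epsilon>2 field_simps)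
  then show "\<epsilon> < 1/2"
    using power_less_imp_less_base[of \<epsilon> 2 "1/2"] by simp
  have "4 * T div n * n + 4 * T mod n = 4 * T" by (rule div_mult_mod_eq)
  moreover have "4 * T mod n < n" using n by simp
  ultimately show "4 * T < (k + 1) * n"
    unfolding k_def add_mult_distrib by linarith
  show "4 * \<delta> < (1 - 4 * \<epsilon>\<^sup>2) ^ k"
  proof (rule four_delta_less_power[OF \<delta>])
    show "0 \<le> 4 * \<epsilon>\<^sup>2" by simp
    show "4 * \<epsilon>\<^sup>2 \<le> 1/2"
      using nl T_pos by (simp add: \<epsilon>2 field_simps)
    have "real k \<le> 4 * real T / real n"
      using of_nat_div_le_of_nat[of "4 * T" n] by (simp add: k_def)
    then have "real k * (4 * \<epsilon>\<^sup>2) \<le> 4 * real T / real n * (4 * \<epsilon>\<^sup>2)"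
      by (intro mult_right_mono) simp_all
    also have "\<dots> = l / 4"
      using T_pos n by (simp add: \<epsilon>2)
    finally show "real k * (4 * \<epsilon>\<^sup>2) \<le> ln (1 / (4 * \<delta>)) / 4"
      by (simp add: l_def)
  qed
  have "real n * l / (64 * real T) * (real T)\<^sup>2 = real n * real T * l / 8\<^sup>2"
    using T_pos by (simp add: power2_eq_square)
  moreover have "\<epsilon> * real T = sqrt (real n * l / (64 * real T)) * sqrt ((real T)\<^sup>2)"
    using T_pos by (simp add: \<epsilon>_def)
  ultimately have "\<epsilon> * real T = sqrt (real n * real T * l / 8\<^sup>2)"
    by (simp only: real_sqrt_mult[symmetric])
  then show "\<epsilon> * real T = sqrt (real n * real T * ln (1 / (4 * \<delta>))) / 8"
    by (simp add: l_def real_sqrt_divide)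
qed

section \<open>The hard instances\<close>

text \<open>Node of depth \<open>h\<close> on the branch of arm \<open>a\<close>: the depth is the residue modulo \<open>H + 1\<close>, and
  branch nodes lie above the stem nodes \<open>1, \<dots>, H\<close>.\<close>
definition branch_node :: "nat \<Rightarrow> nat \<Rightarrow> nat \<Rightarrow> nat" where
  "branch_node H a h = h + (a + 1) * (H + 1)"

lemma branch_node_mod [simp]: "h \<le> H \<Longrightarrow> branch_node H a h mod Suc H = h"
  unfolding branch_node_def Suc_eq_plus1 mod_mult_self1 by simp

lemma branch_node_div [simp]: "h \<le> H \<Longrightarrow> branch_node H a h div Suc H = a + 1"
  unfolding branch_node_def Suc_eq_plus1 by (subst div_mult_self1) simp_all

lemma branch_node_gt: "H < branch_node H a h"
  by (simp add: branch_node_def trans_le_add1)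

lemma branch_node_inj:
  "h \<le> H \<Longrightarrow> h' \<le> H \<Longrightarrow> branch_node H a h = branch_node H a' h' \<longleftrightarrow> a = a' \<and> h = h'"
  by (metis branch_node_div branch_node_mod add_right_cancel)

lemma branch_node_Suc: "branch_node H a h + 1 = branch_node H a (h + 1)"
  by (simp add: branch_node_def)

lemma branch_node_pred: "1 \<le> h \<Longrightarrow> branch_node H a h - 1 = branch_node H a (h - 1)"
  by (simp add: branch_node_def)

text \<open>Arm \<open>j\<close> pays the biased bit 0 of the state, every other arm the fair bit 1.\<close>
definition state_bit :: "nat \<Rightarrow> nat \<Rightarrow> nat \<Rightarrow> bool" where
  "state_bit j a s = (if a = j then odd (s mod 4) else 2 \<le> s mod 4)"

lemma state_bit_shift [simp]: "state_bit j a (4 * m + s mod 4) = state_bit j a s"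
  by (simp add: state_bit_def)

lemma valid_policy_single_action:
  "valid_policy S \<mu> \<Longrightarrow> x \<in> IX S \<Longrightarrow> iact S x = {c} \<Longrightarrow> \<mu> x = return_pmf c"
  by (auto simp: valid_policy_def set_pmf_subset_singleton)

text \<open>A stem of information sets \<open>1, \<dots>, P + 1\<close> with \<open>P = H - d\<close>, where
  \<open>P + 1\<close> is the only real decision, among the \<open>n\<close> arms; arm \<open>a\<close> leads into a branch
  \<open>branch_node H a h\<close>, \<open>P + 2 \<le> h \<le> H\<close>, paying the arm's bit at each of its \<open>d\<close> steps.
  All other nodes have the single action \<open>0\<close>, except the last node of branch \<open>0\<close>, which gets
  \<open>r + 1\<close> irrelevant actions to make the action count exact.\<close>
locale hard_game =
  fixes H d n r :: nat
  assumes d_pos: "1 \<le> d" and d_le_H: "d \<le> H" and two_le_n: "2 \<le> n"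
    and pad_in_branch: "r = 0 \<or> 2 \<le> d"
begin

abbreviation P :: nat where "P \<equiv> H - d"

definition branch_nodes :: "nat set" where
  "branch_nodes = {branch_node H a h | a h. a < n \<and> P + 2 \<le> h \<and> h \<le> H}"

definition pad_node :: nat where
  "pad_node = branch_node H 0 H"

definition info :: infostruct where
  "info = \<lparr>IX = {1..P + 1} \<union> branch_nodes, ilev = (\<lambda>x. x mod (H + 1)),
     iact = (\<lambda>x. if x = P + 1 then {..<n} else if x = pad_node then {..r} else {0}),
     ipar = (\<lambda>x. if H < x \<and> x mod (H + 1) = P + 2 then (P + 1, x div (H + 1) - 1) else (x - 1, 0))\<rparr>"

definition next_node :: "nat \<Rightarrow> nat \<Rightarrow> nat" where
  "next_node x a = (if x = P + 1 then branch_node H a (P + 2) else x + 1)"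

lemma IX_info [simp]: "IX info = {1..P + 1} \<union> branch_nodes"
  by (simp add: info_def)

lemma ilev_info [simp]: "ilev info x = x mod (H + 1)"
  by (simp add: info_def)

lemma decision_le_H: "P + 1 \<le> H"
  using d_pos d_le_H by simp

lemma branch_nodes_gt: "x \<in> branch_nodes \<Longrightarrow> H < x"
  unfolding branch_nodes_def using branch_node_gt by auto

lemma branch_nodes_eq: "branch_nodes = (\<lambda>(a, h). branch_node H a h) ` ({..<n} \<times> {P + 2..H})"
  unfolding branch_nodes_def by fastforce

lemma branch_node_in_branch_nodes:
  "a < n \<Longrightarrow> P + 2 \<le> h \<Longrightarrow> h \<le> H \<Longrightarrow> branch_node H a h \<in> branch_nodes"
  unfolding branch_nodes_def by blast

lemma finite_branch_nodes: "finite branch_nodes"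
  unfolding branch_nodes_eq by simp

lemma card_branch_nodes: "card branch_nodes = n * (d - 1)"
proof -
  have "inj_on (\<lambda>(a, h). branch_node H a h) ({..<n} \<times> {P + 2..H})"
    by (auto simp: inj_on_def branch_node_inj)
  moreover have "card {P + 2..H} = d - 1" using d_le_H by simp
  ultimately show ?thesis unfolding branch_nodes_eq by (simp add: card_image card_cartesian_product)
qed

lemma iact_stem: "x \<le> P \<Longrightarrow> iact info x = {0}"
  using branch_node_gt[of H 0 H] decision_le_H by (auto simp: info_def pad_node_def)

lemma iact_decision: "iact info (Suc P) = {..<n}"
  by (simp add: info_def)

lemma iact_branch: "h < H \<Longrightarrow> iact info (branch_node H a h) = {0}"
  using branch_node_gt[of H a h] branch_node_inj[where h=h and h'=H and a=a and a'=0] decision_le_H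
  by (auto simp: info_def pad_node_def)

lemma ipar_stem: "x \<le> H \<Longrightarrow> ipar info x = (x - 1, 0)"
  by (simp add: info_def)

lemma ipar_branch:
  "P + 2 \<le> h \<Longrightarrow> h \<le> H \<Longrightarrow> ipar info (branch_node H a h)
     = (if h = P + 2 then (P + 1, a) else (branch_node H a (h - 1), 0))"
  using branch_node_gt[of H a h] branch_node_pred[of h H a] by (simp add: info_def)

lemma next_node_child:
  assumes x: "x \<in> IX info" and a: "a \<in> iact info x" and lev: "x mod (H + 1) < H"
  shows "next_node x a \<in> IX info \<and> next_node x a mod (H + 1) = x mod (H + 1) + 1
       \<and> ipar info (next_node x a) = (x, a)"
proof (cases "x \<in> branch_nodes")
  case True
  then obtain b h where x: "x = branch_node H b h" and b: "b < n" and h: "P + 2 \<le> h" "h \<le> H"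
    unfolding branch_nodes_def by auto
  with lev have "h < H" by simp
  with a x iact_branch have "a = 0" by simp
  have "next_node x a = branch_node H b (h + 1)"
    using x branch_node_gt[of H b h] decision_le_H branch_node_Suc by (simp add: next_node_def)
  moreover have "branch_node H b (h + 1) \<in> branch_nodes"
    using b h \<open>h < H\<close> by (intro branch_node_in_branch_nodes) simp_all
  ultimately show ?thesis
    using x h \<open>h < H\<close> \<open>a = 0\<close> ipar_branch[of "h + 1" b] by simp
next
  case False
  with x have x: "1 \<le> x" "x \<le> P + 1" by auto
  show ?thesis
  proof (cases "x = P + 1")
    case True
    then have "a < n" using a iact_decision by simp
    moreover have "P + 2 \<le> H" using lev True decision_le_H by simp
    ultimately have "branch_node H a (P + 2) \<in> branch_nodes"
      by (intro branch_node_in_branch_nodes) simp_all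
    then show ?thesis
      using True \<open>P + 2 \<le> H\<close> ipar_branch[of "P + 2" a] by (simp add: next_node_def)
  next
    case False
    with x have "x \<le> P" by simp
    with a iact_stem have "a = 0" by simp
    with \<open>x \<le> P\<close> x decision_le_H ipar_stem[of "x + 1"] show ?thesis
      by (simp add: next_node_def)
  qed
qed

lemma ipar_parent:
  assumes x: "x \<in> IX info" and lev: "2 \<le> x mod (H + 1)"
  shows "fst (ipar info x) \<in> IX info \<and> fst (ipar info x) mod (H + 1) = x mod (H + 1) - 1
       \<and> snd (ipar info x) \<in> iact info (fst (ipar info x))"
proof (cases "x \<in> branch_nodes")
  case True
  then obtain b h where x: "x = branch_node H b h" and b: "b < n" and h: "P + 2 \<le> h" "h \<le> H"
    unfolding branch_nodes_def by auto
  show ?thesis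
  proof (cases "h = P + 2")
    case True
    then show ?thesis using x b h decision_le_H ipar_branch[of h b] iact_decision by simp
  next
    case False
    then have "branch_node H b (h - 1) \<in> branch_nodes"
      using b h by (intro branch_node_in_branch_nodes) simp_all
    moreover have "iact info (branch_node H b (h - 1)) = {0}"
      using h by (intro iact_branch) simp
    ultimately show ?thesis
      using x h False ipar_branch[of h b] by simp
  qed
next
  case False
  with x have "1 \<le> x" "x \<le> P + 1" by auto
  moreover from this lev decision_le_H have "2 \<le> x" by simp
  moreover have "iact info (x - 1) = {0}"
    using \<open>x \<le> P + 1\<close> by (intro iact_stem) simp
  moreover have "x - 1 \<in> IX info"
    unfolding IX_info using \<open>2 \<le> x\<close> \<open>x \<le> P + 1\<close> by (intro UnI1) auto
  ultimately show ?thesis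
    using decision_le_H ipar_stem[of x] by simp
qed

lemma wf_info: "wf_struct H info"
  unfolding wf_struct_def
proof (intro conjI ballI impI)
  show "finite (IX info)" using finite_branch_nodes by simp
next
  fix x assume "x \<in> IX info"
  then show "1 \<le> ilev info x" "ilev info x \<le> H" "finite (iact info x)" "iact info x \<noteq> {}"
    using decision_le_H two_le_n
    by (auto simp: info_def branch_nodes_def lessThan_empty_iff)
next
  fix x assume "x \<in> IX info" "2 \<le> ilev info x"
  then show "fst (ipar info x) \<in> IX info" "ilev info (fst (ipar info x)) = ilev info x - 1"
    "snd (ipar info x) \<in> iact info (fst (ipar info x))"
    using ipar_parent by simp_all
next
  fix x a assume "x \<in> IX info" "a \<in> iact info x" "ilev info x < H"
  then show "\<exists>x'\<in>IX info. ilev info x' = ilev info x + 1 \<and> ipar info x' = (x, a)"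
    using next_node_child[of x a] by (intro bexI[of _ "next_node x a"]) auto
qed

lemma num_actions_info: "num_actions info = (H - d) + n * d + r"
proof -
  define c where "c x = card (iact info x)" for x
  have "IX info = {1..P} \<union> ({P + 1} \<union> branch_nodes)" by auto
  moreover have "{1..P} \<inter> ({P + 1} \<union> branch_nodes) = {}" "P + 1 \<notin> branch_nodes"
    using branch_nodes_gt decision_le_H by fastforce+
  ultimately have "num_actions info = sum c {1..P} + (c (P + 1) + sum c branch_nodes)"
    unfolding num_actions_def c_def[symmetric] using finite_branch_nodes by (simp add: sum.union_disjoint)
  also have "sum c {1..P} = P"
    using iact_stem by (simp add: c_def)
  also have "c (P + 1) = n"
    by (simp add: c_def iact_decision)
  also have "sum c branch_nodes = (\<Sum>x\<in>branch_nodes. 1 + (if x = pad_node then r else 0))"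
  proof (intro sum.cong refl)
    fix x assume "x \<in> branch_nodes"
    then have "x \<noteq> P + 1" using branch_nodes_gt decision_le_H by fastforce
    then show "c x = 1 + (if x = pad_node then r else 0)" by (simp add: c_def info_def)
  qed
  also have "\<dots> = card branch_nodes + (\<Sum>x\<in>branch_nodes. if x = pad_node then r else 0)"
    by (simp only: sum.distrib) simp
  also have "(\<Sum>x\<in>branch_nodes. if x = pad_node then r else 0) = r"
  proof -
    have "pad_node \<in> branch_nodes" if "r \<noteq> 0"
      using that pad_in_branch two_le_n d_le_H unfolding pad_node_def branch_nodes_def by fastforce
    then show ?thesis using finite_branch_nodes by (auto simp: sum.delta)
  qed
  moreover have "n + n * (d - 1) = n * d" using d_pos by (cases d) simp_all
  ultimately show ?thesis by (simp add: card_branch_nodes)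
qed

text \<open>A state is \<open>4 x + 2 c + c'\<close> for the information set \<open>x\<close>; the fair bit \<open>c\<close> and the bit
  \<open>c'\<close> of mean \<open>p\<close> are drawn at the start and never change.\<close>
definition bandit_game :: "nat \<Rightarrow> real \<Rightarrow> game" where
  "bandit_game j p = \<lparr>gstruct = info, obs = (\<lambda>s. s div 4),
     init = bind_pmf (bernoulli_pmf (1/2)) (\<lambda>c. map_pmf (\<lambda>c'. 4 + 2 * of_bool c + of_bool c') (bernoulli_pmf p)),
     trans = (\<lambda>h s a. return_pmf (4 * next_node (s div 4) a + s mod 4)),
     rew = (\<lambda>h s a. if s div 4 = P + 1 then of_bool (state_bit j a s)
                    else if H < s div 4 then of_bool (state_bit j (s div 4 div (H + 1) - 1) s) else 0)\<rparr>"

lemma wf_bandit_game: "wf_game H (bandit_game j p)"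
  unfolding wf_game_def
proof (intro conjI allI impI ballI)
  show "wf_struct H (gstruct (bandit_game j p))" using wf_info by (simp add: bandit_game_def)
next
  fix s assume "s \<in> set_pmf (init (bandit_game j p))"
  then have "s div 4 = 1" by (auto simp: bandit_game_def)
  then show "obs (bandit_game j p) s \<in> IX (gstruct (bandit_game j p))"
    "ilev (gstruct (bandit_game j p)) (obs (bandit_game j p) s) = 1"
    using decision_le_H by (auto simp: bandit_game_def info_def)
next
  fix h s a s'
  assume "obs (bandit_game j p) s \<in> IX (gstruct (bandit_game j p)) \<and>
      ilev (gstruct (bandit_game j p)) (obs (bandit_game j p) s) = h \<and> h < H \<and>
      a \<in> iact (gstruct (bandit_game j p)) (obs (bandit_game j p) s)"
    and "s' \<in> set_pmf (trans (bandit_game j p) h s a)"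
  then show "obs (bandit_game j p) s' \<in> IX (gstruct (bandit_game j p))"
    "ilev (gstruct (bandit_game j p)) (obs (bandit_game j p) s') = h + 1"
    "ipar (gstruct (bandit_game j p)) (obs (bandit_game j p) s') = (obs (bandit_game j p) s, a)"
    using next_node_child[of "s div 4" a] by (auto simp: bandit_game_def)
qed (auto simp: bandit_game_def)

lemma gstruct_bandit_game [simp]: "gstruct (bandit_game j p) = info"
  by (simp add: bandit_game_def)

lemma obs_bandit_game [simp]: "obs (bandit_game j p) s = s div 4"
  by (simp add: bandit_game_def)

lemma trans_bandit_game [simp]: "trans (bandit_game j p) h s a = return_pmf (4 * next_node (s div 4) a + s mod 4)"
  by (simp add: bandit_game_def)

lemma rew_stem: "s div 4 \<le> P \<Longrightarrow> rew (bandit_game j p) h s a = 0"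
  using decision_le_H by (simp add: bandit_game_def)

lemma rew_decision: "s div 4 = P + 1 \<Longrightarrow> rew (bandit_game j p) h s a = of_bool (state_bit j a s)"
  by (simp add: bandit_game_def)

lemma rew_branch:
  "s div 4 = branch_node H b h \<Longrightarrow> h \<le> H \<Longrightarrow> rew (bandit_game j p) h' s a = of_bool (state_bit j b s)"
  using branch_node_gt[of H b h] decision_le_H by (simp add: bandit_game_def)

fun branch_trace :: "policy \<Rightarrow> nat \<Rightarrow> bool \<Rightarrow> nat \<Rightarrow> nat \<Rightarrow> trace pmf" where
  "branch_trace \<mu> a b h 0 = return_pmf []"
| "branch_trace \<mu> a b h (Suc k) = bind_pmf (\<mu> (branch_node H a h)) (\<lambda>a'.
     map_pmf (\<lambda>rest. (branch_node H a h, a', of_bool b) # rest)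
       (if k = 0 then return_pmf [] else branch_trace \<mu> a b (h + 1) k))"

definition stem_trace :: trace where
  "stem_trace = map (\<lambda>x. (x, 0, 0)) [1..<P + 1]"

definition outcome_trace :: "policy \<Rightarrow> nat \<Rightarrow> bool \<Rightarrow> trace pmf" where
  "outcome_trace \<mu> a b =
     map_pmf (\<lambda>rest. stem_trace @ (P + 1, a, of_bool b) # rest) (branch_trace \<mu> a b (P + 2) (d - 1))"

lemma ep_branch:
  "P + 2 \<le> h \<Longrightarrow> h + k = H + 1 \<Longrightarrow> s div 4 = branch_node H a h \<Longrightarrow>
     ep (bandit_game j p) \<mu> h k s = branch_trace \<mu> a (state_bit j a s) h k"
proof (induction k arbitrary: h s)
  case (Suc k)
  then have "h \<le> H" by simp
  have "next_node (s div 4) a' = branch_node H a (h + 1)" for a'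
    using Suc.prems branch_node_gt[of H a h] decision_le_H branch_node_Suc by (simp add: next_node_def)
  moreover have "ep (bandit_game j p) \<mu> (Suc h) k (4 * branch_node H a (h + 1) + s mod 4)
      = branch_trace \<mu> a (state_bit j a s) (h + 1) k" if "k \<noteq> 0"
    using Suc.IH[of "h + 1"] Suc.prems that by simp
  ultimately show ?case
    using Suc.prems rew_branch[OF _ \<open>h \<le> H\<close>]
    by (simp add: map_pmf_def bind_return_pmf cong: if_cong)
qed simp

lemma ep_decision:
  assumes "s div 4 = P + 1"
  shows "ep (bandit_game j p) \<mu> (P + 1) d s = bind_pmf (\<mu> (P + 1)) (\<lambda>a.
     map_pmf (\<lambda>rest. (P + 1, a, of_bool (state_bit j a s)) # rest)
       (branch_trace \<mu> a (state_bit j a s) (P + 2) (d - 1)))"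
proof -
  define k where "k = d - 1"
  have "ep (bandit_game j p) \<mu> (P + 2) k (4 * branch_node H a (P + 2) + s mod 4)
      = branch_trace \<mu> a (state_bit j a s) (P + 2) k" for a
    using d_pos d_le_H by (subst ep_branch) (auto simp: k_def)
  moreover have "ep (bandit_game j p) \<mu> (P + 1) d s = ep (bandit_game j p) \<mu> (P + 1) (Suc k) s"
    using d_pos by (simp add: k_def)
  ultimately show ?thesis
    using assms rew_decision[OF assms] unfolding k_def[symmetric]
    by (cases k) (simp_all add: next_node_def map_pmf_def bind_return_pmf cong: if_cong)
qed

lemma ep_stem:
  assumes v: "valid_policy info \<mu>" and s': "s' div 4 = P + 1"
  shows "1 \<le> x \<Longrightarrow> x \<le> P + 1 \<Longrightarrow> s div 4 = x \<Longrightarrow> s mod 4 = s' mod 4 \<Longrightarrow>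
    ep (bandit_game j p) \<mu> x (H + 1 - x) s
      = map_pmf (\<lambda>rest. map (\<lambda>x. (x, 0, 0)) [x..<P + 1] @ rest) (ep (bandit_game j p) \<mu> (P + 1) d s')"
proof (induction "P + 1 - x" arbitrary: x s)
  case 0
  then have "x = P + 1" "s = s'" using s' div_mult_mod_eq[of s 4] div_mult_mod_eq[of s' 4] by simp_all
  then show ?case using d_pos d_le_H by (simp add: map_pmf_ident)
next
  case (Suc m)
  then have x: "x \<le> P" "x < H" using decision_le_H by simp_all
  then have "\<mu> x = return_pmf 0"
    using v Suc.prems iact_stem by (intro valid_policy_single_action) (auto simp: info_def)
  moreover have "rew (bandit_game j p) x s 0 = 0"
    using Suc.prems x by (simp add: rew_stem)
  moreover have "H + 1 - x = Suc (H + 1 - Suc x)" "H + 1 - Suc x \<noteq> 0" using x by simp_all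
  moreover have "[x..<P + 1] = x # [Suc x..<P + 1]" using x by (intro upt_conv_Cons) simp
  moreover have "ep (bandit_game j p) \<mu> (x + 1) (H + 1 - (x + 1)) (4 * (x + 1) + s mod 4)
      = map_pmf (\<lambda>rest. map (\<lambda>x. (x, 0, 0)) [x + 1..<P + 1] @ rest) (ep (bandit_game j p) \<mu> (P + 1) d s')"
  proof (rule Suc.hyps(1))
    show "m = P + 1 - (x + 1)" using Suc.hyps(2) by simp
    show "(4 * (x + 1) + s mod 4) div 4 = x + 1" by presburger
    show "(4 * (x + 1) + s mod 4) mod 4 = s' mod 4" using Suc.prems(4) by presburger
  qed (use x in simp_all)
  ultimately show ?case
    using Suc.prems x
    by (simp add: next_node_def map_pmf_def bind_return_pmf bind_assoc_pmf del: upt_Suc)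
qed

lemma length_stem_trace: "length stem_trace = P"
  by (simp add: stem_trace_def del: upt_Suc)

lemma episode_bandit_game:
  assumes v: "valid_policy info \<mu>"
  shows "episode H (bandit_game j p) \<mu>
     = bind_pmf (\<mu> (P + 1)) (\<lambda>a. bind_pmf (arm_coin j p a) (outcome_trace \<mu> a))"
proof -
  have "ep (bandit_game j p) \<mu> 1 H (4 + 2 * of_bool c + of_bool c')
      = bind_pmf (\<mu> (P + 1)) (\<lambda>a. outcome_trace \<mu> a (if a = j then c' else c))" for c c'
  proof -
    define s where "s = 4 * (P + 1) + (2 * of_bool c + of_bool c')"
    have s_div: "s div 4 = P + 1"
      by (cases c; cases c') (simp_all add: s_def)
    have s_mod: "s mod 4 = (4 + 2 * of_bool c + of_bool c') mod 4"
      by (cases c; cases c') (simp_all add: s_def)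
    have s_bit: "state_bit j a s = (if a = j then c' else c)" for a
      by (cases c; cases c') (simp_all add: s_def state_bit_def)
    have "ep (bandit_game j p) \<mu> 1 H (4 + 2 * of_bool c + of_bool c')
        = map_pmf (\<lambda>rest. stem_trace @ rest) (ep (bandit_game j p) \<mu> (P + 1) d s)"
      using ep_stem[OF v s_div, of 1 "4 + 2 * of_bool c + of_bool c'"] s_mod by (simp add: stem_trace_def)
    also have "\<dots> = bind_pmf (\<mu> (P + 1)) (\<lambda>a. outcome_trace \<mu> a (if a = j then c' else c))"
      unfolding ep_decision[OF s_div] s_bit by (simp add: outcome_trace_def map_bind_pmf map_pmf_comp)
    finally show ?thesis .
  qed
  then have "episode H (bandit_game j p) \<mu> = bind_pmf (bernoulli_pmf (1/2)) (\<lambda>c. bind_pmf (bernoulli_pmf p)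
       (\<lambda>c'. bind_pmf (\<mu> (P + 1)) (\<lambda>a. outcome_trace \<mu> a (if a = j then c' else c))))"
    by (simp add: episode_def bandit_game_def[of j p] map_pmf_def bind_assoc_pmf bind_return_pmf)
  also have "\<dots> = bind_pmf (\<mu> (P + 1)) (\<lambda>a. bind_pmf (bernoulli_pmf (1/2)) (\<lambda>c. bind_pmf (bernoulli_pmf p)
       (\<lambda>c'. outcome_trace \<mu> a (if a = j then c' else c))))"
    by (subst bind_commute_pmf) (subst (2) bind_commute_pmf, rule refl)
  also have "\<dots> = bind_pmf (\<mu> (P + 1)) (\<lambda>a. bind_pmf (arm_coin j p a) (outcome_trace \<mu> a))"
  proof (intro bind_pmf_cong[OF refl])
    fix a
    show "bind_pmf (bernoulli_pmf (1/2)) (\<lambda>c. bind_pmf (bernoulli_pmf p)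
        (\<lambda>c'. outcome_trace \<mu> a (if a = j then c' else c))) = bind_pmf (arm_coin j p a) (outcome_trace \<mu> a)"
      by (cases "a = j") (simp_all add: arm_coin_def)
  qed
  finally show ?thesis .
qed

section \<open>Value and regret of the hard instances\<close>

text \<open>Entry \<open>P\<close> of a trace is the decision step.\<close>
definition trace_arm :: "trace \<Rightarrow> nat" where
  "trace_arm e = fst (snd (e ! P))"

definition trace_bit :: "trace \<Rightarrow> bool" where
  "trace_bit e \<longleftrightarrow> snd (snd (e ! P)) = 1"

definition trace_return :: "trace \<Rightarrow> real" where
  "trace_return e = sum_list (map (\<lambda>(x, a, r). r) e)"

lemma outcome_trace_reveals: "e \<in> set_pmf (outcome_trace \<mu> a b) \<Longrightarrow> trace_arm e = a \<and> trace_bit e = b"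
  by (auto simp: outcome_trace_def trace_arm_def trace_bit_def nth_append length_stem_trace)

lemma trace_return_branch: "e \<in> set_pmf (branch_trace \<mu> a b h k) \<Longrightarrow> trace_return e = real k * of_bool b"
  by (induction k arbitrary: h e) (auto simp: trace_return_def algebra_simps split: if_splits)

lemma trace_return_outcome: "e \<in> set_pmf (outcome_trace \<mu> a b) \<Longrightarrow> trace_return e = real d * of_bool b"
  using d_pos
  by (auto simp: outcome_trace_def stem_trace_def trace_return_branch[unfolded trace_return_def]
      trace_return_def o_def of_nat_diff algebra_simps)

lemma val_bandit_game:
  assumes v: "valid_policy info \<mu>" and p: "0 \<le> p" "p \<le> 1"
  shows "val H (bandit_game j p) \<mu> = real d * (1/2 + (p - 1/2) * pmf (\<mu> (P + 1)) j)"
proof -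
  let ?E = "episode H (bandit_game j p) \<mu>"
  have ep: "?E = bind_pmf (\<mu> (P + 1)) (\<lambda>a. bind_pmf (arm_coin j p a) (outcome_trace \<mu> a))"
    by (rule episode_bandit_game[OF v])
  have "val H (bandit_game j p) \<mu> = measure_pmf.expectation ?E (\<lambda>e. real d * of_bool (trace_bit e))"
    unfolding val_def trace_return_def[symmetric]
  proof (intro integral_cong_AE AE_pmfI)
    fix e assume "e \<in> set_pmf ?E"
    then obtain a b where "e \<in> set_pmf (outcome_trace \<mu> a b)" by (auto simp: ep)
    then show "trace_return e = real d * of_bool (trace_bit e)"
      by (simp add: outcome_trace_reveals trace_return_outcome)
  qed simp_all
  also have "\<dots> = measure_pmf.expectation (map_pmf trace_bit ?E) (\<lambda>b. real d * of_bool b)"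
    by simp
  also have "map_pmf trace_bit ?E = bind_pmf (\<mu> (P + 1)) (arm_coin j p)"
  proof -
    have "map_pmf trace_bit (outcome_trace \<mu> a b) = map_pmf (\<lambda>_. b) (outcome_trace \<mu> a b)" for a b
      by (intro map_pmf_cong refl) (simp add: outcome_trace_reveals)
    then show ?thesis by (simp add: ep map_bind_pmf bind_return_pmf')
  qed
  also have "measure_pmf.expectation (bind_pmf (\<mu> (P + 1)) (arm_coin j p)) (\<lambda>b. real d * of_bool b)
      = real d * pmf (bind_pmf (\<mu> (P + 1)) (arm_coin j p)) True"
    by (subst integral_measure_pmf_real[of "{True}"]) (auto split: if_splits)
  also have "pmf (bind_pmf (\<mu> (P + 1)) (arm_coin j p)) True
      = measure_pmf.expectation (\<mu> (P + 1)) (\<lambda>a. 1/2 + (p - 1/2) * indicator {j} a)"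
    unfolding pmf_bind using p by (intro Bochner_Integration.integral_cong refl) (simp add: arm_coin_def)
  also have "\<dots> = 1/2 + (p - 1/2) * pmf (\<mu> (P + 1)) j"
    by (subst Bochner_Integration.integral_add)
      (auto simp: measure_pmf_single measure_pmf.emeasure_eq_measure intro!: integrable_real_indicator)
  finally show ?thesis .
qed

lemma valid_alg_policy: "valid_alg H L \<Longrightarrow> valid_policy info (L info t h)"
  using wf_info by (simp add: valid_alg_def)

text \<open>The comparator always pulls arm \<open>j\<close>; each round gains \<open>d (p - 1/2)\<close> times the
  probability that the algorithm does not.\<close>
lemma regret_ge_missed_plays:
  assumes vL: "valid_alg H L" and j: "j < n" and p: "1/2 \<le> p" "p \<le> 1"
  shows "real d * (p - 1/2) * (real T - (\<Sum>t<T. pmf (L info t (take t hist) (P + 1)) j))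
           \<le> regret H (bandit_game j p) L T hist"
proof -
  define V where "V = {\<mu>. valid_policy info \<mu>}"
  define f where "f \<mu> = (\<Sum>t<T. val H (bandit_game j p) \<mu> - val H (bandit_game j p) (L info t (take t hist)))"
    for \<mu>
  define \<mu>\<^sub>j :: policy where "\<mu>\<^sub>j x = return_pmf (if x = P + 1 then j else 0)" for x
  have val: "val H (bandit_game j p) \<mu> = real d * (1/2 + (p - 1/2) * pmf (\<mu> (P + 1)) j)" if "\<mu> \<in> V" for \<mu>
    using that p by (intro val_bandit_game) (auto simp: V_def)
  have "\<mu>\<^sub>j \<in> V"
    unfolding V_def valid_policy_def using j iact_stem by (auto simp: \<mu>\<^sub>j_def info_def)
  moreover have "bdd_above (f ` V)"
  proof (rule bdd_aboveI2)
    fix \<mu> assume "\<mu> \<in> V"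
    have "(p - 1/2) * pmf (\<mu> (P + 1)) j \<le> p - 1/2"
      using p pmf_le_1[of "\<mu> (P + 1)" j] by (simp add: mult_left_le)
    with \<open>\<mu> \<in> V\<close> have "val H (bandit_game j p) \<mu> \<le> real d * p"
      by (simp add: val mult_left_mono)
    then show "f \<mu> \<le> (\<Sum>t<T. real d * p - val H (bandit_game j p) (L info t (take t hist)))"
      unfolding f_def by (intro sum_mono) simp
  qed
  moreover have "regret H (bandit_game j p) L T hist = (SUP \<mu>\<in>V. f \<mu>)"
    by (simp add: regret_def V_def f_def)
  ultimately have "f \<mu>\<^sub>j \<le> regret H (bandit_game j p) L T hist"
    by (simp add: cSUP_upper)
  moreover have "f \<mu>\<^sub>j = real d * (p - 1/2) * (real T - (\<Sum>t<T. pmf (L info t (take t hist) (P + 1)) j))"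
  proof -
    have "val H (bandit_game j p) (L info t (take t hist))
        = real d * (1/2 + (p - 1/2) * pmf (L info t (take t hist) (P + 1)) j)" for t
      using val valid_alg_policy[OF vL] by (simp add: V_def)
    then have "f \<mu>\<^sub>j = (\<Sum>t<T. real d * (p - 1/2) * (1 - pmf (L info t (take t hist) (P + 1)) j))"
      unfolding f_def val[OF \<open>\<mu>\<^sub>j \<in> V\<close>] by (intro sum.cong) (simp_all add: \<mu>\<^sub>j_def algebra_simps)
    then show ?thesis by (simp add: sum_distrib_left[symmetric] sum_subtractf)
  qed
  ultimately show ?thesis by simp
qed

lemma run_bandit_game:
  assumes vL: "valid_alg H L"
  shows "run H (bandit_game j p) L t
    = history_pmf (bandit_step (\<lambda>t h. L info t h (P + 1)) (\<lambda>t h. outcome_trace (L info t h)) j p) t"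
proof (induction t)
  case (Suc t)
  have "episode H (bandit_game j p) (L info t h)
      = bandit_step (\<lambda>t h. L info t h (P + 1)) (\<lambda>t h. outcome_trace (L info t h)) j p t h" for h
    unfolding bandit_step_def by (rule episode_bandit_game[OF valid_alg_policy[OF vL]])
  with Suc show ?case by simp
qed simp

lemma regret_large_with_prob:
  assumes vL: "valid_alg H L" and \<epsilon>: "0 < \<epsilon>" "\<epsilon> < 1/2" and k: "4 * T < (k + 1) * n"
  shows "\<exists>j<n. (1 - 4 * \<epsilon>\<^sup>2) ^ k / 4 \<le> measure_pmf.prob (run H (bandit_game j (1/2 + \<epsilon>)) L T)
            {hist. real d * \<epsilon> * real T / 2 \<le> regret H (bandit_game j (1/2 + \<epsilon>)) L T hist}"
proof -
  define \<pi> where "\<pi> = (\<lambda>t h. L info t h (P + 1))"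
  define Q where "Q = (\<lambda>t h. outcome_trace (L info t h))"
  define p where "p = 1/2 + \<epsilon>"
  have p: "0 < p" "p < 1" using \<epsilon> by (simp_all add: p_def)
  interpret revealing_bandit \<pi> Q trace_arm trace_bit
    by unfold_locales (simp add: Q_def outcome_trace_reveals)
  obtain j where j: "j < n"
    and fair: "1/2 \<le> measure_pmf.prob (history_pmf (bandit_step \<pi> Q 0 (1/2)) T) (rarely_pulled \<pi> trace_arm T k j)"
    using exists_rarely_pulled_arm[OF two_le_n k] by blast
  define G where "G = rarely_pulled \<pi> trace_arm T k j"
  define c where "c = 1 - 4 * \<epsilon>\<^sup>2"
  have c: "0 < c"
    using \<epsilon> power_strict_mono[of \<epsilon> "1/2" 2] by (simp add: c_def power_divide)
  have "run H (bandit_game j p) L T = history_pmf (bandit_step \<pi> Q j p) T"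
    unfolding \<pi>_def Q_def by (rule run_bandit_game[OF vL])
  moreover have "measure_pmf.prob (history_pmf (bandit_step \<pi> Q j (1/2)) T) G
      \<le> lr_moment p ^ k * measure_pmf.prob (history_pmf (bandit_step \<pi> Q j p) T) G + 1/4"
    by (rule change_of_measure[OF p]) (simp add: G_def rarely_pulled_def)
  ultimately have "measure_pmf.prob (history_pmf (bandit_step \<pi> Q 0 (1/2)) T) G
      \<le> measure_pmf.prob (run H (bandit_game j p) L T) G / c ^ k + 1/4"
    using bandit_step_fair[of \<pi> Q j 0] by (simp add: p_def lr_moment_half_plus c_def power_divide)
  with fair have "1/4 \<le> measure_pmf.prob (run H (bandit_game j p) L T) G / c ^ k"
    unfolding G_def by linarith
  then have "c ^ k / 4 \<le> measure_pmf.prob (run H (bandit_game j p) L T) G"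
    using c by (simp add: field_simps)
  also have "\<dots> \<le> measure_pmf.prob (run H (bandit_game j p) L T)
      {hist. real d * \<epsilon> * real T / 2 \<le> regret H (bandit_game j p) L T hist}"
  proof (rule measure_pmf.finite_measure_mono)
    show "G \<subseteq> {hist. real d * \<epsilon> * real T / 2 \<le> regret H (bandit_game j p) L T hist}"
    proof
      fix hist assume "hist \<in> G"
      then have "real T / 2 \<le> real T - (\<Sum>t<T. pmf (L info t (take t hist) (P + 1)) j)"
        by (simp add: G_def rarely_pulled_def \<pi>_def)
      then have "real d * \<epsilon> * (real T / 2)
          \<le> real d * \<epsilon> * (real T - (\<Sum>t<T. pmf (L info t (take t hist) (P + 1)) j))"
        using \<epsilon> by (intro mult_left_mono) simp_all
      then have "real d * \<epsilon> * real T / 2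
          \<le> real d * (p - 1/2) * (real T - (\<Sum>t<T. pmf (L info t (take t hist) (P + 1)) j))"
        by (simp add: p_def)
      also have "\<dots> \<le> regret H (bandit_game j p) L T hist"
        using \<epsilon> by (intro regret_ge_missed_plays[OF vL j]) (simp_all add: p_def)
      finally show "hist \<in> {hist. real d * \<epsilon> * real T / 2 \<le> regret H (bandit_game j p) L T hist}"
        by simp
    qed
  qed simp
  finally show ?thesis using j by (auto simp: c_def p_def)
qed

lemma regret_lower_bound:
  assumes vL: "valid_alg H L" and \<delta>: "0 < \<delta>" "\<delta> < 1/4"
    and T: "0.4 * real n * ln (1 / (4 * \<delta>)) \<le> real T"
  shows "\<exists>g. wf_game H g \<and> num_actions (gstruct g) = (H - d) + n * d + r \<and>
           \<delta> < measure_pmf.prob (run H g L T)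
             {hist. real d * sqrt (real n * real T * ln (1 / (4 * \<delta>))) / 16 \<le> regret H g L T hist}"
proof -
  obtain \<epsilon> k where \<epsilon>: "0 < \<epsilon>" "\<epsilon> < 1/2" and k: "4 * T < (k + 1) * n"
    and power: "4 * \<delta> < (1 - 4 * \<epsilon>\<^sup>2) ^ k"
    and \<epsilon>T: "\<epsilon> * real T = sqrt (real n * real T * ln (1 / (4 * \<delta>))) / 8"
    using exists_hard_bias[OF \<delta> two_le_n T] by blast
  obtain j where "(1 - 4 * \<epsilon>\<^sup>2) ^ k / 4 \<le> measure_pmf.prob (run H (bandit_game j (1/2 + \<epsilon>)) L T)
      {hist. real d * \<epsilon> * real T / 2 \<le> regret H (bandit_game j (1/2 + \<epsilon>)) L T hist}"
    using regret_large_with_prob[OF vL \<epsilon> k] by blast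
  moreover have "real d * \<epsilon> * real T / 2 = real d * sqrt (real n * real T * ln (1 / (4 * \<delta>))) / 16"
    using \<epsilon>T by (simp add: mult.assoc[of "real d"])
  ultimately have "\<delta> < measure_pmf.prob (run H (bandit_game j (1/2 + \<epsilon>)) L T)
      {hist. real d * sqrt (real n * real T * ln (1 / (4 * \<delta>))) / 16 \<le> regret H (bandit_game j (1/2 + \<epsilon>)) L T hist}"
    using power by simp
  then show ?thesis
    using wf_bandit_game num_actions_info by (intro exI[of _ "bandit_game j (1/2 + \<epsilon>)"]) simp
qed

end

section \<open>The lower bound\<close>

lemma hard_game_parameters:
  assumes H: "1 \<le> H" and AX: "H < AX"
  obtains d n r where "hard_game H d n r" and "AX = (H - d) + n * d + r"
    and "n = (if 2 * H \<le> AX then AX div H else 2)"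
    and "(real AX - real H) * min (real AX - real H) (real H) \<le> 4 * (real d)\<^sup>2 * real n"
proof (cases "2 * H \<le> AX")
  case True
  define n where "n = AX div H"
  have "2 \<le> n"
    using div_le_mono[OF True, of H] H by (simp add: n_def)
  moreover have "AX mod H = 0 \<or> 2 \<le> H"
    using H by (cases "H = 1") auto
  ultimately have game: "hard_game H H n (AX mod H)"
    using H by unfold_locales simp_all
  have eq: "AX = (H - H) + n * H + AX mod H"
    by (simp add: n_def)
  have area: "(real AX - real H) * min (real AX - real H) (real H) \<le> 4 * (real H)\<^sup>2 * real n"
  proof -
    have "AX div H * H + AX mod H = AX" by (rule div_mult_mod_eq)
    moreover have "AX mod H < H" using H by simp
    ultimately have "AX < (n + 1) * H"
      unfolding n_def add_mult_distrib by linarith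
    then have "real AX \<le> (real n + 1) * real H"
      by (metis less_imp_le of_nat_1 of_nat_add of_nat_le_iff of_nat_mult)
    then have "real AX - real H \<le> real n * real H"
      by (simp add: algebra_simps)
    moreover have "min (real AX - real H) (real H) \<le> real H" by simp
    ultimately have "(real AX - real H) * min (real AX - real H) (real H) \<le> real n * real H * real H"
      using AX by (intro mult_mono) simp_all
    also have "\<dots> \<le> 4 * (real H)\<^sup>2 * real n"
      by (simp add: power2_eq_square)
    finally show ?thesis .
  qed
  show ?thesis
    by (rule that[OF game eq _ area]) (simp add: n_def True)
next
  case False
  then have game: "hard_game H (AX - H) 2 0"
    using AX by unfold_locales simp_all
  have eq: "AX = (H - (AX - H)) + 2 * (AX - H) + 0"
    using AX False by simp
  have "(real AX - real H) * min (real AX - real H) (real H) = (real (AX - H))\<^sup>2"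
    using AX False by (simp add: of_nat_diff power2_eq_square)
  then have area: "(real AX - real H) * min (real AX - real H) (real H) \<le> 4 * (real (AX - H))\<^sup>2 * real (2::nat)"
    by simp
  show ?thesis
    by (rule that[OF game eq _ area]) (simp add: False)
qed

lemma sqrt_area_bound:
  fixes A d n x :: real
  assumes area: "A \<le> 4 * d\<^sup>2 * n" and x: "0 \<le> x" and d: "0 \<le> d"
  shows "1/32 * sqrt (A * x) \<le> d * sqrt (n * x) / 16"
proof -
  have "A * x \<le> (2 * d)\<^sup>2 * (n * x)"
    using mult_right_mono[OF area x] by (simp add: power_mult_distrib mult_ac)
  then have "sqrt (A * x) \<le> 2 * d * sqrt (n * x)"
    using d by (metis real_sqrt_le_mono real_sqrt_mult real_sqrt_unique zero_le_mult_iff zero_le_numeral)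
  then show ?thesis by simp
qed

theorem mainTheorem11:
  "\<exists>c::real. c > 0 \<and>
     (\<forall>(H::nat) (T::nat) (AX::nat) (\<delta>::real) (L::algorithm).
        1 \<le> H \<longrightarrow> AX > H \<longrightarrow> 0 < \<delta> \<longrightarrow> \<delta> < 1/4 \<longrightarrow>
        real T \<ge> 0.4 * real (if AX \<ge> 2 * H then AX div H else 2) * ln (1 / (4 * \<delta>)) \<longrightarrow>
        valid_alg H L \<longrightarrow>
        (\<exists>g. wf_game H g \<and> num_actions (gstruct g) = AX \<and>
           measure_pmf.prob (run H g L T)
             {hist. regret H g L T hist \<ge>
                c * sqrt ((real AX - real H) * min (real AX - real H) (real H) * real T
                          * ln (1 / (4 * \<delta>)))} > \<delta>))"
proof (intro exI[of _ "1/32"] conjI allI impI)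
  fix H T AX :: nat and \<delta> :: real and L :: algorithm
  assume H: "1 \<le> H" and AX: "H < AX" and \<delta>: "0 < \<delta>" "\<delta> < 1/4" and vL: "valid_alg H L"
    and T: "real T \<ge> 0.4 * real (if AX \<ge> 2 * H then AX div H else 2) * ln (1 / (4 * \<delta>))"
  obtain d n r where "hard_game H d n r" and AX_eq: "AX = (H - d) + n * d + r"
    and n: "n = (if 2 * H \<le> AX then AX div H else 2)"
    and area: "(real AX - real H) * min (real AX - real H) (real H) \<le> 4 * (real d)\<^sup>2 * real n"
    using hard_game_parameters[OF H AX] .
  interpret hard_game H d n r by fact
  have T': "0.4 * real n * ln (1 / (4 * \<delta>)) \<le> real T"
    using T n by simp
  define X where "X = real T * ln (1 / (4 * \<delta>))"
  obtain g where g: "wf_game H g" "num_actions (gstruct g) = AX"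
    and prob: "\<delta> < measure_pmf.prob (run H g L T) {hist. real d * sqrt (real n * X) / 16 \<le> regret H g L T hist}"
    using regret_lower_bound[OF vL \<delta> T'] unfolding AX_eq[symmetric] X_def mult.assoc by blast
  have "1/32 * sqrt ((real AX - real H) * min (real AX - real H) (real H) * X) \<le> real d * sqrt (real n * X) / 16"
    using sqrt_area_bound[OF area] \<delta> by (simp add: X_def)
  then have "measure_pmf.prob (run H g L T) {hist. real d * sqrt (real n * X) / 16 \<le> regret H g L T hist}
      \<le> measure_pmf.prob (run H g L T)
           {hist. 1/32 * sqrt ((real AX - real H) * min (real AX - real H) (real H) * X) \<le> regret H g L T hist}"
    by (intro measure_pmf.finite_measure_mono) auto
  with g prob show "\<exists>g. wf_game H g \<and> num_actions (gstruct g) = AX \<and> \<delta> < measure_pmf.prob (run H g L T)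
      {hist. 1/32 * sqrt ((real AX - real H) * min (real AX - real H) (real H) * real T * ln (1 / (4 * \<delta>)))
        \<le> regret H g L T hist}"
    by (intro exI[of _ g]) (simp add: X_def mult.assoc)
qed simp

end
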